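(* Let $\theta^1,\theta^2\in[0,\infty)^{s_0}$. Suppose the balance equation (B) holds for $\theta^1$, for $\theta^2$, and for $\theta^1-\frac{\theta^1\cdot\zeta_k}{\theta^2\cdot\zeta_k}\theta^2$ for every $k\in(\Gamma_{\theta^1}^+\cap\Gamma_{\theta^2}^-)\cup(\Gamma_{\theta^1}^-\cap\Gamma_{\theta^2}^+)$ (for such $k$ the coefficient $-\frac{\theta^1\cdot\zeta_k}{\theta^2\cdot\zeta_k}$ is positive). Then (B) holds for $c_1\theta^1+c_2\theta^2$ for all $c_1,c_2>0$.
   Context: Fix integers $s_0,r_0\ge 1$ and, for $k=1,\dots,r_0$, vectors $\nu_k,\nu_k'\in\mathbb{N}^{s_0}$ (reactant and product vectors of reaction $k$); set $\zeta_k=\nu_k'-\nu_k$. Fix $\alpha\in[0,\infty)^{s_0}$ and $\beta\in\mathbb{R}^{r_0}$ and set $\rho_k=\beta_k+\nu_k\cdot\alpha$. For $\theta\in[0,\infty)^{s_0}$ let $\Gamma_\theta^+=\{k:\theta\cdot\zeta_k>0\}$, $\Gamma_\theta^-=\{k:\theta\cdot\zeta_k<0\}$ and $\mathrm{supp}(\theta)=\{i:\theta_i>0\}$. A maximum over the empty set is $-\infty$. For $\theta\in[0,\infty)^{s_0}$ and $\gamma\in\mathbb{R}$: the balance equation for $\theta$ is (B) $\max_{k\in\Gamma_\theta^-}\rho_k=\max_{k\in\Gamma_\theta^+}\rho_k$; the time-scale constraint for $\theta$ at $\gamma$ is (T) $\gamma\le\max_{i:\theta_i>0}\alpha_i-\max_{k\in\Gamma_\theta^+\cup\Gamma_\theta^-}\rho_k$;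 Condition 3.2 holds for $\theta$ at $\gamma$ if (B) or (T) holds. *)

theory Defs
  imports "HOL-Library.Extended_Real"
begin

text \<open>Vectors in R^{s0} are functions nat => real, only the entries with index < s0 matter.
  Reactions are indexed by k < r0; nu k i and nu' k i are the reactant/product coefficients.\<close>

definition dotp :: "nat \<Rightarrow> (nat \<Rightarrow> real) \<Rightarrow> (nat \<Rightarrow> real) \<Rightarrow> real" where
  "dotp s0 x y = (\<Sum>i<s0. x i * y i)"

definition zeta :: "(nat \<Rightarrow> nat \<Rightarrow> nat) \<Rightarrow> (nat \<Rightarrow> nat \<Rightarrow> nat) \<Rightarrow> nat \<Rightarrow> nat \<Rightarrow> real" where
  "zeta nu nu' k i = real (nu' k i) - real (nu k i)"

definition rho :: "nat \<Rightarrow> (nat \<Rightarrow> nat \<Rightarrow> nat) \<Rightarrow> (nat \<Rightarrow> real) \<Rightarrow> (nat \<Rightarrow> real) \<Rightarrow> nat \<Rightarrow> real" where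
  "rho s0 nu alpha beta k = beta k + dotp s0 (\<lambda>i. real (nu k i)) alpha"

definition Gamma_plus :: "nat \<Rightarrow> nat \<Rightarrow> (nat \<Rightarrow> nat \<Rightarrow> nat) \<Rightarrow> (nat \<Rightarrow> nat \<Rightarrow> nat) \<Rightarrow> (nat \<Rightarrow> real) \<Rightarrow> nat set" where
  "Gamma_plus s0 r0 nu nu' \<theta> = {k. k < r0 \<and> dotp s0 \<theta> (zeta nu nu' k) > 0}"

definition Gamma_minus :: "nat \<Rightarrow> nat \<Rightarrow> (nat \<Rightarrow> nat \<Rightarrow> nat) \<Rightarrow> (nat \<Rightarrow> nat \<Rightarrow> nat) \<Rightarrow> (nat \<Rightarrow> real) \<Rightarrow> nat set" where
  "Gamma_minus s0 r0 nu nu' \<theta> = {k. k < r0 \<and> dotp s0 \<theta> (zeta nu nu' k) < 0}"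

text \<open>Maximum over a finite set with value in ereal; the supremum of the empty set is -\<infinity>.\<close>
definition balance :: "nat \<Rightarrow> nat \<Rightarrow> (nat \<Rightarrow> nat \<Rightarrow> nat) \<Rightarrow> (nat \<Rightarrow> nat \<Rightarrow> nat) \<Rightarrow>
    (nat \<Rightarrow> real) \<Rightarrow> (nat \<Rightarrow> real) \<Rightarrow> (nat \<Rightarrow> real) \<Rightarrow> bool" where
  "balance s0 r0 nu nu' alpha beta \<theta> \<longleftrightarrow>
     (SUP k\<in>Gamma_minus s0 r0 nu nu' \<theta>. ereal (rho s0 nu alpha beta k)) =
     (SUP k\<in>Gamma_plus s0 r0 nu nu' \<theta>. ereal (rho s0 nu alpha beta k))"

end

theory Submission
  imports Defs
begin

(*
  The balance equation for a vector depends only on the sign pattern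
  j \<mapsto> sign (\<theta> \<cdot> \<zeta>_j).  Two elementary facts drive the argument:
  (1) if the positive (negative) index set of g is the union of those of g1 and g2,
      then balance for g1 and g2 implies balance for g, since a maximum over a union
      is the maximum of the two maxima;
  (2) along a segment x \<mapsto> p + x q of affine functions, at a point t lying strictly
      between two parameters s < u with no zero crossing in (s, u), the sign pattern
      is the union of the patterns at s and at u.
  We parametrize the segment as (1 - x) \<theta>1 + x \<theta>2, 0 \<le> x \<le> 1.  The endpoints are balanced
  by hypothesis, and every zero crossing 0 < x < 1 of some (1 - x) \<theta>1\<cdot>\<zeta>_k + x \<theta>2\<cdot>\<zeta>_k is,
  after positive rescaling, exactly one of the vectors assumed balanced.  Since these
  parameters form a finite set, (2) fills the gaps between consecutive ones, giving
  balance on the whole segment; positive rescaling yields c1 \<theta>1 + c2 \<theta>2.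
  The file first treats abstract sign patterns (fact (1), scaling), then a single affine
  function and affine families (fact (2)), then the segment from \<theta>1 to \<theta>2
  (balance_at_crossing, balance_on_segment), and finally the theorem.
*)

definition sign_balanced :: "nat \<Rightarrow> (nat \<Rightarrow> ereal) \<Rightarrow> (nat \<Rightarrow> real) \<Rightarrow> bool" where
  "sign_balanced r0 R g \<longleftrightarrow>
     (SUP k\<in>{k. k < r0 \<and> g k < 0}. R k) = (SUP k\<in>{k. k < r0 \<and> g k > 0}. R k)"

lemma balance_iff_sign_balanced:
  "balance s0 r0 nu nu' alpha beta \<theta> \<longleftrightarrow>
     sign_balanced r0 (\<lambda>k. ereal (rho s0 nu alpha beta k)) (\<lambda>j. dotp s0 \<theta> (zeta nu nu' j))"
  unfolding balance_def sign_balanced_def Gamma_plus_def Gamma_minus_def by simp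

lemma sign_balanced_union:
  assumes "sign_balanced r0 R g1" "sign_balanced r0 R g2"
    and "\<forall>j<r0. g j > 0 \<longleftrightarrow> g1 j > 0 \<or> g2 j > 0"
    and "\<forall>j<r0. g j < 0 \<longleftrightarrow> g1 j < 0 \<or> g2 j < 0"
  shows "sign_balanced r0 R g"
proof -
  have neg: "{k. k < r0 \<and> g k < 0} = {k. k < r0 \<and> g1 k < 0} \<union> {k. k < r0 \<and> g2 k < 0}"
    using assms(4) by auto
  have pos: "{k. k < r0 \<and> g k > 0} = {k. k < r0 \<and> g1 k > 0} \<union> {k. k < r0 \<and> g2 k > 0}"
    using assms(3) by auto
  show ?thesis using assms(1,2) unfolding sign_balanced_def neg pos SUP_union by simp
qed

lemma sign_balanced_scale:
  assumes "c > 0"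
  shows "sign_balanced r0 R (\<lambda>j. c * g j) \<longleftrightarrow> sign_balanced r0 R g"
  using assms by (simp add: sign_balanced_def zero_less_mult_iff mult_less_0_iff)

lemma dotp_lin: "dotp s0 (\<lambda>i. x * \<theta>1 i + y * \<theta>2 i) z = x * dotp s0 \<theta>1 z + y * dotp s0 \<theta>2 z"
  by (simp add: dotp_def sum.distrib sum_distrib_left algebra_simps)

lemma dotp_scale: "dotp s0 (\<lambda>i. c * \<theta> i) z = c * dotp s0 \<theta> z"
  by (simp add: dotp_def sum_distrib_left algebra_simps)

lemma balance_scale:
  assumes "c > 0"
  shows "balance s0 r0 nu nu' alpha beta (\<lambda>i. c * \<theta> i) \<longleftrightarrow> balance s0 r0 nu nu' alpha beta \<theta>"
  unfolding balance_iff_sign_balanced dotp_scale using sign_balanced_scale[OF assms] .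

lemma balance_segment_iff:
  "balance s0 r0 nu nu' alpha beta (\<lambda>i. (1 - x) * \<theta>1 i + x * \<theta>2 i) \<longleftrightarrow>
     sign_balanced r0 (\<lambda>k. ereal (rho s0 nu alpha beta k))
       (\<lambda>j. dotp s0 \<theta>1 (zeta nu nu' j)
              + x * (dotp s0 \<theta>2 (zeta nu nu' j) - dotp s0 \<theta>1 (zeta nu nu' j)))"
  unfolding balance_iff_sign_balanced dotp_lin by (simp add: algebra_simps)

lemma affine_positive_between:
  fixes p q s t u :: real
  assumes st: "s < t" and tu: "t < u"
    and no_zero: "\<And>x. s < x \<Longrightarrow> x < u \<Longrightarrow> p + x * q = 0 \<Longrightarrow> q = 0"
  shows "p + t * q > 0 \<longleftrightarrow> p + s * q > 0 \<or> p + u * q > 0"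
proof
  assume "p + t * q > 0"
  show "p + s * q > 0 \<or> p + u * q > 0"
  proof (rule ccontr)
    assume "\<not> (p + s * q > 0 \<or> p + u * q > 0)"
    then have "(u - t) * (p + s * q) \<le> 0" "(t - s) * (p + u * q) \<le> 0"
      using st tu by (simp_all add: mult_nonneg_nonpos)
    moreover have "(u - s) * (p + t * q) = (u - t) * (p + s * q) + (t - s) * (p + u * q)"
      by (simp add: algebra_simps)
    moreover have "(u - s) * (p + t * q) > 0" using \<open>p + t * q > 0\<close> st tu by simp
    ultimately show False by linarith
  qed
next
  have zero_between: False if pos: "p + v * q > 0" and nonpos: "p + t * q \<le> 0"
    and "s \<le> v" "v \<le> u" "v \<noteq> t" for v
  proof -
    define w where "w = (p + v * q) / ((p + v * q) - (p + t * q))"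
    have w: "0 < w" "w \<le> 1" using pos nonpos unfolding w_def by (simp_all add: field_simps)
    have "(p + v * q) - (p + t * q) \<noteq> 0" using pos nonpos by linarith
    then have "w * ((p + v * q) - (p + t * q)) = p + v * q"
      using w_def nonzero_eq_divide_eq by blast
    then have zero: "p + (v + w * (t - v)) * q = 0" by (simp add: algebra_simps)
    have "q \<noteq> 0" using pos nonpos by auto
    moreover have "s < v + w * (t - v) \<and> v + w * (t - v) < u"
    proof (cases "v < t")
      case True
      then have "0 < w * (t - v)" "w * (t - v) \<le> t - v"
        using w by (simp_all add: mult_left_le_one_le)
      then show ?thesis using \<open>s \<le> v\<close> tu by simp
    next
      case False
      then have "v - t > 0" using \<open>v \<noteq> t\<close> by simp
      then have "0 < w * (v - t)" "w * (v - t) \<le> v - t"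
        using w by (simp_all add: mult_left_le_one_le)
      then show ?thesis using \<open>v \<le> u\<close> st by (simp add: algebra_simps)
    qed
    ultimately show False using no_zero zero by blast
  qed
  assume "p + s * q > 0 \<or> p + u * q > 0"
  then show "p + t * q > 0"
    using zero_between[of s] zero_between[of u] st tu by force
qed

lemma sign_balanced_between:
  fixes p q :: "nat \<Rightarrow> real"
  assumes bal_s: "sign_balanced r0 R (\<lambda>j. p j + s * q j)"
    and bal_u: "sign_balanced r0 R (\<lambda>j. p j + u * q j)"
    and st: "s < t" and tu: "t < u"
    and no_zero: "\<forall>j<r0. \<forall>x. s < x \<longrightarrow> x < u \<longrightarrow> p j + x * q j = 0 \<longrightarrow> q j = 0"
  shows "sign_balanced r0 R (\<lambda>j. p j + t * q j)"
proof (rule sign_balanced_union[OF bal_s bal_u]; intro allI impI)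
  fix j assume "j < r0"
  then have zero: "\<And>x. s < x \<Longrightarrow> x < u \<Longrightarrow> p j + x * q j = 0 \<Longrightarrow> q j = 0"
    using no_zero by blast
  show "p j + t * q j > 0 \<longleftrightarrow> p j + s * q j > 0 \<or> p j + u * q j > 0"
    using affine_positive_between[OF st tu zero] .
  have "- p j + t * - q j > 0 \<longleftrightarrow> - p j + s * - q j > 0 \<or> - p j + u * - q j > 0"
    using affine_positive_between[OF st tu, of "- p j" "- q j"] zero by force
  then show "p j + t * q j < 0 \<longleftrightarrow> p j + s * q j < 0 \<or> p j + u * q j < 0" by auto
qed

text \<open>If the family is balanced on a finite set \<open>D\<close> containing the endpoints of \<open>[l, h]\<close>
  and all zero crossings inside, then it is balanced on all of \<open>[l, h]\<close>: every other
  point lies between two consecutive elements of \<open>D\<close>.\<close>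
lemma sign_balanced_interval:
  fixes p q :: "nat \<Rightarrow> real" and D :: "real set"
  assumes fin: "finite D" and lD: "l \<in> D" and hD: "h \<in> D"
    and bal: "\<And>x. x \<in> D \<Longrightarrow> sign_balanced r0 R (\<lambda>j. p j + x * q j)"
    and crossing: "\<And>j x. j < r0 \<Longrightarrow> l < x \<Longrightarrow> x < h \<Longrightarrow> p j + x * q j = 0 \<Longrightarrow> q j \<noteq> 0 \<Longrightarrow> x \<in> D"
    and lt: "l \<le> t" and th: "t \<le> h"
  shows "sign_balanced r0 R (\<lambda>j. p j + t * q j)"
proof (cases "t \<in> D")
  case True
  then show ?thesis using bal by blast
next
  case False
  define below where "below = {x\<in>D. x < t}"
  define above where "above = {x\<in>D. t < x}"
  have "l \<noteq> t" "h \<noteq> t" using False lD hD by auto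
  then have "l \<in> below" "h \<in> above"
    using lD hD lt th unfolding below_def above_def by simp_all
  moreover have "finite below" "finite above" using fin unfolding below_def above_def by simp_all
  ultimately have s_in: "Max below \<in> below" and u_in: "Min above \<in> above"
    using Max_in Min_in by blast+
  have gap: "x \<le> Max below \<or> Min above \<le> x" if "x \<in> D" for x
    using that False \<open>finite below\<close> \<open>finite above\<close> unfolding below_def above_def
    by (metis (mono_tags, lifting) Max_ge Min_le linorder_neqE_linordered_idom mem_Collect_eq)
  show ?thesis
  proof (rule sign_balanced_between)
    show "sign_balanced r0 R (\<lambda>j. p j + Max below * q j)"
      "sign_balanced r0 R (\<lambda>j. p j + Min above * q j)"
      using s_in u_in bal unfolding below_def above_def by blast+
    show "Max below < t" "t < Min above" using s_in u_in unfolding below_def above_def by auto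
    have "l \<le> Max below" "Min above \<le> h"
      using \<open>l \<in> below\<close> \<open>h \<in> above\<close> \<open>finite below\<close> \<open>finite above\<close> by simp_all
    then show "\<forall>j<r0. \<forall>x. Max below < x \<longrightarrow> x < Min above \<longrightarrow> p j + x * q j = 0 \<longrightarrow> q j = 0"
      using crossing gap by force
  qed
qed

text \<open>A zero crossing \<open>0 < x < 1\<close> of reaction \<open>k\<close> on the segment forces \<open>\<theta>1\<cdot>\<zeta>_k\<close> and
  \<open>\<theta>2\<cdot>\<zeta>_k\<close> to have opposite signs, and the segment point is a positive multiple of
  \<open>\<theta>1 - (\<theta>1\<cdot>\<zeta>_k / \<theta>2\<cdot>\<zeta>_k) \<theta>2\<close>; so it is balanced by the hypothesis on those vectors.\<close>
lemma balance_at_crossing: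
  assumes hyp: "\<forall>k \<in> (Gamma_plus s0 r0 nu nu' \<theta>1 \<inter> Gamma_minus s0 r0 nu nu' \<theta>2)
               \<union> (Gamma_minus s0 r0 nu nu' \<theta>1 \<inter> Gamma_plus s0 r0 nu nu' \<theta>2).
           balance s0 r0 nu nu' alpha beta
             (\<lambda>i. \<theta>1 i - (dotp s0 \<theta>1 (zeta nu nu' k) / dotp s0 \<theta>2 (zeta nu nu' k)) * \<theta>2 i)"
    and x: "0 < x" "x < 1" and k: "k < r0"
    and zero: "(1 - x) * dotp s0 \<theta>1 (zeta nu nu' k) + x * dotp s0 \<theta>2 (zeta nu nu' k) = 0"
    and ne: "dotp s0 \<theta>1 (zeta nu nu' k) \<noteq> dotp s0 \<theta>2 (zeta nu nu' k)"
  shows "balance s0 r0 nu nu' alpha beta (\<lambda>i. (1 - x) * \<theta>1 i + x * \<theta>2 i)"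
proof -
  define a where "a = dotp s0 \<theta>1 (zeta nu nu' k)"
  define b where "b = dotp s0 \<theta>2 (zeta nu nu' k)"
  have ab: "(1 - x) * a = - (x * b)" using zero unfolding a_def b_def by linarith
  have sign_a: "(1 - x) * a > 0 \<longleftrightarrow> a > 0" "(1 - x) * a < 0 \<longleftrightarrow> a < 0"
    using x by (simp_all add: zero_less_mult_iff mult_less_0_iff)
  have sign_b: "x * b > 0 \<longleftrightarrow> b > 0" "x * b < 0 \<longleftrightarrow> b < 0"
    using x by (simp_all add: zero_less_mult_iff mult_less_0_iff)
  have "b \<noteq> 0" using ab ne x unfolding a_def b_def by auto
  then have "a > 0 \<and> b < 0 \<or> a < 0 \<and> b > 0"
    using ab sign_a sign_b by (metis neg_0_less_iff_less neg_less_0_iff_less linorder_neqE_linordered_idom)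
  then have bal: "balance s0 r0 nu nu' alpha beta (\<lambda>i. \<theta>1 i - (a / b) * \<theta>2 i)"
    using hyp k unfolding a_def b_def Gamma_plus_def Gamma_minus_def by auto
  have segment_point: "(\<lambda>i. (1 - x) * (\<theta>1 i - (a / b) * \<theta>2 i)) = (\<lambda>i. (1 - x) * \<theta>1 i + x * \<theta>2 i)"
  proof
    fix i
    have "(1 - x) * (a / b) = - x" using ab \<open>b \<noteq> 0\<close> by (simp add: divide_simps)
    moreover have "(1 - x) * (\<theta>1 i - (a / b) * \<theta>2 i) = (1 - x) * \<theta>1 i - ((1 - x) * (a / b)) * \<theta>2 i"
      by (simp add: algebra_simps)
    ultimately show "(1 - x) * (\<theta>1 i - (a / b) * \<theta>2 i) = (1 - x) * \<theta>1 i + x * \<theta>2 i" by simp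
  qed
  have "1 - x > 0" using x by simp
  with bal show ?thesis unfolding segment_point[symmetric] by (simp only: balance_scale)
qed

lemma finite_crossings:
  fixes p q :: "nat \<Rightarrow> real"
  shows "finite {x. \<exists>j<r0. p j + x * q j = 0 \<and> q j \<noteq> 0}"
proof (rule finite_subset)
  show "{x. \<exists>j<r0. p j + x * q j = 0 \<and> q j \<noteq> 0} \<subseteq> (\<lambda>j. - p j / q j) ` {..<r0}"
  proof
    fix x assume "x \<in> {x. \<exists>j<r0. p j + x * q j = 0 \<and> q j \<noteq> 0}"
    then obtain j where "j < r0" "p j + x * q j = 0" "q j \<noteq> 0" by blast
    then have "x = - p j / q j" by (simp add: field_simps)
    then show "x \<in> (\<lambda>j. - p j / q j) ` {..<r0}" using \<open>j < r0\<close> by blast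
  qed
qed simp

lemma balance_on_segment:
  assumes bal1: "balance s0 r0 nu nu' alpha beta \<theta>1"
    and bal2: "balance s0 r0 nu nu' alpha beta \<theta>2"
    and hyp: "\<forall>k \<in> (Gamma_plus s0 r0 nu nu' \<theta>1 \<inter> Gamma_minus s0 r0 nu nu' \<theta>2)
               \<union> (Gamma_minus s0 r0 nu nu' \<theta>1 \<inter> Gamma_plus s0 r0 nu nu' \<theta>2).
           balance s0 r0 nu nu' alpha beta
             (\<lambda>i. \<theta>1 i - (dotp s0 \<theta>1 (zeta nu nu' k) / dotp s0 \<theta>2 (zeta nu nu' k)) * \<theta>2 i)"
    and t: "0 \<le> t" "t \<le> 1"
  shows "balance s0 r0 nu nu' alpha beta (\<lambda>i. (1 - t) * \<theta>1 i + t * \<theta>2 i)"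
proof -
  define a where "a j = dotp s0 \<theta>1 (zeta nu nu' j)" for j
  define b where "b j = dotp s0 \<theta>2 (zeta nu nu' j)" for j
  define R where "R k = ereal (rho s0 nu alpha beta k)" for k
  have segment: "balance s0 r0 nu nu' alpha beta (\<lambda>i. (1 - x) * \<theta>1 i + x * \<theta>2 i)
                   \<longleftrightarrow> sign_balanced r0 R (\<lambda>j. a j + x * (b j - a j))" for x
    unfolding balance_segment_iff a_def b_def R_def ..
  define D where "D = {0, 1} \<union> {x. 0 < x \<and> x < 1 \<and> (\<exists>j<r0. a j + x * (b j - a j) = 0 \<and> b j - a j \<noteq> 0)}"
  have "D \<subseteq> {0, 1} \<union> {x. \<exists>j<r0. a j + x * (b j - a j) = 0 \<and> b j - a j \<noteq> 0}"
    unfolding D_def by blast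
  moreover have "finite ({0, 1} \<union> {x. \<exists>j<r0. a j + x * (b j - a j) = 0 \<and> b j - a j \<noteq> 0})"
    using finite_crossings[of r0 a "\<lambda>j. b j - a j"] by simp
  ultimately have "finite D" by (rule finite_subset)
  have D_balanced: "sign_balanced r0 R (\<lambda>j. a j + x * (b j - a j))" if xD: "x \<in> D" for x
  proof -
    consider "x = 0" | "x = 1"
      | j where "0 < x" "x < 1" "j < r0" "a j + x * (b j - a j) = 0" "b j - a j \<noteq> 0"
      using xD unfolding D_def by blast
    then have "balance s0 r0 nu nu' alpha beta (\<lambda>i. (1 - x) * \<theta>1 i + x * \<theta>2 i)"
    proof cases
      case (3 j)
      then show ?thesis using balance_at_crossing[OF hyp, of x j]
        unfolding a_def b_def by (simp add: algebra_simps)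
    qed (use bal1 bal2 in simp_all)
    then show ?thesis using segment by blast
  qed
  have "sign_balanced r0 R (\<lambda>j. a j + t * (b j - a j))"
    using sign_balanced_interval[OF \<open>finite D\<close>, where p = a and q = "\<lambda>j. b j - a j"] D_balanced t
    unfolding D_def by blast
  then show ?thesis using segment by blast
qed

theorem lemma3p10:
  fixes s0 r0 :: nat and nu nu' :: "nat \<Rightarrow> nat \<Rightarrow> nat"
    and alpha beta \<theta>1 \<theta>2 :: "nat \<Rightarrow> real"
  assumes "s0 \<ge> 1" and "r0 \<ge> 1"
    and "\<forall>i<s0. alpha i \<ge> 0"
    and "\<forall>i<s0. \<theta>1 i \<ge> 0" and "\<forall>i<s0. \<theta>2 i \<ge> 0"
    and "balance s0 r0 nu nu' alpha beta \<theta>1"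
    and "balance s0 r0 nu nu' alpha beta \<theta>2"
    and "\<forall>k \<in> (Gamma_plus s0 r0 nu nu' \<theta>1 \<inter> Gamma_minus s0 r0 nu nu' \<theta>2)
               \<union> (Gamma_minus s0 r0 nu nu' \<theta>1 \<inter> Gamma_plus s0 r0 nu nu' \<theta>2).
           balance s0 r0 nu nu' alpha beta
             (\<lambda>i. \<theta>1 i - (dotp s0 \<theta>1 (zeta nu nu' k) / dotp s0 \<theta>2 (zeta nu nu' k)) * \<theta>2 i)"
  shows "\<forall>c1 c2 :: real. c1 > 0 \<longrightarrow> c2 > 0 \<longrightarrow>
           balance s0 r0 nu nu' alpha beta (\<lambda>i. c1 * \<theta>1 i + c2 * \<theta>2 i)"
proof (intro allI impI)
  fix c1 c2 :: real assume c1: "c1 > 0" and c2: "c2 > 0"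
  define t where "t = c2 / (c1 + c2)"
  have "0 \<le> t" "t \<le> 1" using c1 c2 unfolding t_def by simp_all
  then have "balance s0 r0 nu nu' alpha beta (\<lambda>i. (1 - t) * \<theta>1 i + t * \<theta>2 i)"
    using balance_on_segment assms(6-8) by blast
  then have "balance s0 r0 nu nu' alpha beta (\<lambda>i. (c1 + c2) * ((1 - t) * \<theta>1 i + t * \<theta>2 i))"
    using balance_scale c1 c2 by simp
  moreover have "(c1 + c2) * (1 - t) = c1" "(c1 + c2) * t = c2"
    using c1 c2 unfolding t_def by (simp_all add: field_simps)
  ultimately show "balance s0 r0 nu nu' alpha beta (\<lambda>i. c1 * \<theta>1 i + c2 * \<theta>2 i)"
    by (simp add: distrib_left mult.assoc[symmetric])
qed

end
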